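(* Let $x$ be a stable g-matching with $x\ne x^{\max}$. For each rotation $R\in\mathcal R(x)$, the g-matching $x':=x+\chi^R$ is stable and satisfies $x\prec_F x'$.
   Context: Let $G=(V,E)$ be a finite bipartite graph with color classes $W$ and $F$; the edge joining $w\in W$ and $f\in F$ is written $wf$. Let $b\in\mathbb Z_+^E$ be capacities. For $v\in V$, $E_v$ is the set of edges at $v$, $\mathcal B_v=\{z\in\mathbb Z_+^{E_v}: z\le b|_{E_v}\}$, $\mathbf 1^e$ the unit vector of $e$, $|z|=\sum_e|z(e)|$, $\wedge,\vee$ componentwise min/max. Each $v$ has a choice function $C_v:\mathcal B_v\to\mathcal B_v$ with $C_v(z)\le z$ and, for all $z,z'$: (A1) $z\ge z'\ge C_v(z)\Rightarrow C_v(z')=C_v(z)$; (A2) $z\ge z'\Rightarrow C_v(z)\wedge z'\le C_v(z')$; (A3) $z\ge z'\Rightarrow|C_v(z)|\ge|C_v(z')|$. $z$ is acceptable if $C_v(z)=z$; for distinct acceptable $z,z'$, $z'\prec_v z$ iff $C_v(z\vee z')=z$. $x_v$ = restriction of $x$ to $E_v$. A g-matching is $x\in\mathbb Z_+^E$, $x\le b$, each $x_v$ acceptable; $x\prec_F y$ (distinct) iff $x_f\preceq_f y_f$ for all $f\in F$. $e\in E_v$ is interesting for $v$ under acceptable $z$ if some $z'\in\mathcal B_v$ has $z'(e)>z(e)$, $z'(e')=z(e')$ for $e'\neq e$, $C_v(z')(e)>z(e)$; $e=wf$ blocks a g-matching $x$ if it is interesting for $w$ under $x_w$ and for $f$ under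 $x_f$; stable g-matchings (no blocking edges) form a nonempty finite distributive lattice under $\prec_F$ with maximum $x^{\max}$. Rotations: for stable $x$, $U_F^+(x)$ = edges $wf$ interesting for $f$ under $x_f$; $U_F^-(x)$ = edges $wf$ with $x(wf)>0$ not interesting for $f$. Legal $f$-pair: $(a,c)$, $a\in U_F^+(x)\cap E_f$, $c\in E_f\setminus\{a\}$, $C_f(x_f+\mathbf 1^a)=x_f+\mathbf 1^a-\mathbf 1^c$. Legal $w$-pair: $(c,a)$, $c\in U_F^-(x)\cap E_w$, $a\in U_F^+(x)\cap E_w$, $x_w+\mathbf 1^a-\mathbf 1^c$ acceptable; essential if no $d\in (U_F^+(x)\cap E_w)\setminus\{a\}$ is interesting for $w$ under $x_w+\mathbf 1^a-\mathbf 1^c$ (at most one essential pair per $c$). Digraph $\mathcal D$: vertices $w^e,f^e$ for $e=wf\in U_F^+(x)\cup U_F^-(x)$, arcs $(w^a,f^a)$ for $a\in U_F^+(x)$, $(f^c,w^c)$ for $c\in U_F^-(x)$, $(f^a,f^c)$ for legal $f$-pairs $(a,c)$, $(w^c,w^a)$ for essential $w$-pairs $(c,a)$. Repeatedly delete vertices with no entering arc; the remainder is a disjoint union of directed cycles, each giving a cyclic sequence $(a_1,c_1,\dots,a_k,c_k)$ of distinct edges of $G$; this is a rotation $R$ applicable to $x$, with $\chi^R\in\{0,\pm1\}^E$ equal to $1$ on $\{a_i\}$, $-1$ on $\{c_i\}$, $0$ elsewhere; $\mathcal R(x)$ is the set of these rotations. *)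

theory Defs
  imports Main
begin

text \<open>Vectors in Z_+^E are integer-valued functions on edges,
 nonnegativity being imposed explicitly. A vector on E_v is a function vanishing outside E_v.\<close>

type_synonym ('w,'f) vec = "('w \<times> 'f) \<Rightarrow> int"

definition Ew :: "('w \<times> 'f) set \<Rightarrow> 'w \<Rightarrow> ('w \<times> 'f) set" where
  "Ew E w = {e \<in> E. fst e = w}"

definition Ef :: "('w \<times> 'f) set \<Rightarrow> 'f \<Rightarrow> ('w \<times> 'f) set" where
  "Ef E f = {e \<in> E. snd e = f}"

definition res :: "('w \<times> 'f) set \<Rightarrow> ('w,'f) vec \<Rightarrow> ('w,'f) vec" where
  "res Ev x = (\<lambda>e. if e \<in> Ev then x e else 0)"

definition unitv :: "('w \<times> 'f) \<Rightarrow> ('w,'f) vec" where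
  "unitv a = (\<lambda>e. if e = a then 1 else 0)"

definition vsize :: "('w \<times> 'f) set \<Rightarrow> ('w,'f) vec \<Rightarrow> int" where
  "vsize Ev z = (\<Sum>e\<in>Ev. \<bar>z e\<bar>)"

definition Bset :: "('w,'f) vec \<Rightarrow> ('w \<times> 'f) set \<Rightarrow> ('w,'f) vec set" where
  "Bset b Ev = {z. \<forall>e. (e \<in> Ev \<longrightarrow> 0 \<le> z e \<and> z e \<le> b e) \<and> (e \<notin> Ev \<longrightarrow> z e = 0)}"

definition choice_fun :: "('w,'f) vec \<Rightarrow> ('w \<times> 'f) set \<Rightarrow> (('w,'f) vec \<Rightarrow> ('w,'f) vec) \<Rightarrow> bool" where
  "choice_fun b Ev C \<longleftrightarrow>
     (\<forall>z \<in> Bset b Ev. C z \<in> Bset b Ev \<and> C z \<le> z) \<and>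
     (\<forall>z \<in> Bset b Ev. \<forall>z' \<in> Bset b Ev. z \<ge> z' \<and> z' \<ge> C z \<longrightarrow> C z' = C z) \<and>
     (\<forall>z \<in> Bset b Ev. \<forall>z' \<in> Bset b Ev. z \<ge> z' \<longrightarrow> (\<lambda>e. min (C z e) (z' e)) \<le> C z') \<and>
     (\<forall>z \<in> Bset b Ev. \<forall>z' \<in> Bset b Ev. z \<ge> z' \<longrightarrow> vsize Ev (C z) \<ge> vsize Ev (C z'))"

definition acceptable :: "('w,'f) vec \<Rightarrow> ('w \<times> 'f) set \<Rightarrow> (('w,'f) vec \<Rightarrow> ('w,'f) vec) \<Rightarrow> ('w,'f) vec \<Rightarrow> bool" where
  "acceptable b Ev C z \<longleftrightarrow> z \<in> Bset b Ev \<and> C z = z"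

definition pref_strict :: "('w,'f) vec \<Rightarrow> ('w \<times> 'f) set \<Rightarrow> (('w,'f) vec \<Rightarrow> ('w,'f) vec) \<Rightarrow> ('w,'f) vec \<Rightarrow> ('w,'f) vec \<Rightarrow> bool" where
  "pref_strict b Ev C z' z \<longleftrightarrow> acceptable b Ev C z \<and> acceptable b Ev C z' \<and> z \<noteq> z' \<and>
      C (\<lambda>e. max (z e) (z' e)) = z"

definition pref_le :: "('w,'f) vec \<Rightarrow> ('w \<times> 'f) set \<Rightarrow> (('w,'f) vec \<Rightarrow> ('w,'f) vec) \<Rightarrow> ('w,'f) vec \<Rightarrow> ('w,'f) vec \<Rightarrow> bool" where
  "pref_le b Ev C z' z \<longleftrightarrow> z' = z \<or> pref_strict b Ev C z' z"

definition interesting :: "('w,'f) vec \<Rightarrow> ('w \<times> 'f) set \<Rightarrow> (('w,'f) vec \<Rightarrow> ('w,'f) vec) \<Rightarrow> ('w,'f) vec \<Rightarrow> ('w \<times> 'f) \<Rightarrow> bool" where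
  "interesting b Ev C z e \<longleftrightarrow> e \<in> Ev \<and>
     (\<exists>z' \<in> Bset b Ev. z' e > z e \<and> (\<forall>e'. e' \<noteq> e \<longrightarrow> z' e' = z e') \<and> C z' e > z e)"

definition instance_ok :: "'w set \<Rightarrow> 'f set \<Rightarrow> ('w \<times> 'f) set \<Rightarrow> ('w,'f) vec \<Rightarrow>
    ('w \<Rightarrow> ('w,'f) vec \<Rightarrow> ('w,'f) vec) \<Rightarrow> ('f \<Rightarrow> ('w,'f) vec \<Rightarrow> ('w,'f) vec) \<Rightarrow> bool" where
  "instance_ok W F E b CW CF \<longleftrightarrow> finite W \<and> finite F \<and> E \<subseteq> W \<times> F \<and>
     (\<forall>e \<in> E. 0 \<le> b e) \<and>
     (\<forall>w \<in> W. choice_fun b (Ew E w) (CW w)) \<and> (\<forall>f \<in> F. choice_fun b (Ef E f) (CF f))"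

definition gmatching :: "'w set \<Rightarrow> 'f set \<Rightarrow> ('w \<times> 'f) set \<Rightarrow> ('w,'f) vec \<Rightarrow>
    ('w \<Rightarrow> ('w,'f) vec \<Rightarrow> ('w,'f) vec) \<Rightarrow> ('f \<Rightarrow> ('w,'f) vec \<Rightarrow> ('w,'f) vec) \<Rightarrow> ('w,'f) vec \<Rightarrow> bool" where
  "gmatching W F E b CW CF x \<longleftrightarrow>
     (\<forall>e. e \<notin> E \<longrightarrow> x e = 0) \<and> (\<forall>e \<in> E. 0 \<le> x e \<and> x e \<le> b e) \<and>
     (\<forall>w \<in> W. acceptable b (Ew E w) (CW w) (res (Ew E w) x)) \<and>
     (\<forall>f \<in> F. acceptable b (Ef E f) (CF f) (res (Ef E f) x))"

definition blocking :: "('w \<times> 'f) set \<Rightarrow> ('w,'f) vec \<Rightarrow>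
    ('w \<Rightarrow> ('w,'f) vec \<Rightarrow> ('w,'f) vec) \<Rightarrow> ('f \<Rightarrow> ('w,'f) vec \<Rightarrow> ('w,'f) vec) \<Rightarrow> ('w,'f) vec \<Rightarrow> ('w \<times> 'f) \<Rightarrow> bool" where
  "blocking E b CW CF x e \<longleftrightarrow> e \<in> E \<and>
     interesting b (Ew E (fst e)) (CW (fst e)) (res (Ew E (fst e)) x) e \<and>
     interesting b (Ef E (snd e)) (CF (snd e)) (res (Ef E (snd e)) x) e"

definition stable :: "'w set \<Rightarrow> 'f set \<Rightarrow> ('w \<times> 'f) set \<Rightarrow> ('w,'f) vec \<Rightarrow>
    ('w \<Rightarrow> ('w,'f) vec \<Rightarrow> ('w,'f) vec) \<Rightarrow> ('f \<Rightarrow> ('w,'f) vec \<Rightarrow> ('w,'f) vec) \<Rightarrow> ('w,'f) vec \<Rightarrow> bool" where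
  "stable W F E b CW CF x \<longleftrightarrow> gmatching W F E b CW CF x \<and> (\<nexists>e. blocking E b CW CF x e)"

definition precF :: "'f set \<Rightarrow> ('w \<times> 'f) set \<Rightarrow> ('w,'f) vec \<Rightarrow>
    ('f \<Rightarrow> ('w,'f) vec \<Rightarrow> ('w,'f) vec) \<Rightarrow> ('w,'f) vec \<Rightarrow> ('w,'f) vec \<Rightarrow> bool" where
  "precF F E b CF x y \<longleftrightarrow> x \<noteq> y \<and>
     (\<forall>f \<in> F. pref_le b (Ef E f) (CF f) (res (Ef E f) x) (res (Ef E f) y))"

definition xmax :: "'w set \<Rightarrow> 'f set \<Rightarrow> ('w \<times> 'f) set \<Rightarrow> ('w,'f) vec \<Rightarrow>
    ('w \<Rightarrow> ('w,'f) vec \<Rightarrow> ('w,'f) vec) \<Rightarrow> ('f \<Rightarrow> ('w,'f) vec \<Rightarrow> ('w,'f) vec) \<Rightarrow> ('w,'f) vec" where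
  "xmax W F E b CW CF = (THE m. stable W F E b CW CF m \<and>
      (\<forall>y. stable W F E b CW CF y \<longrightarrow> y = m \<or> precF F E b CF y m))"

definition Uplus :: "('w \<times> 'f) set \<Rightarrow> ('w,'f) vec \<Rightarrow> ('f \<Rightarrow> ('w,'f) vec \<Rightarrow> ('w,'f) vec) \<Rightarrow> ('w,'f) vec \<Rightarrow> ('w \<times> 'f) set" where
  "Uplus E b CF x = {e \<in> E. interesting b (Ef E (snd e)) (CF (snd e)) (res (Ef E (snd e)) x) e}"

definition Uminus :: "('w \<times> 'f) set \<Rightarrow> ('w,'f) vec \<Rightarrow> ('f \<Rightarrow> ('w,'f) vec \<Rightarrow> ('w,'f) vec) \<Rightarrow> ('w,'f) vec \<Rightarrow> ('w \<times> 'f) set" where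
  "Uminus E b CF x = {e \<in> E. x e > 0 \<and> \<not> interesting b (Ef E (snd e)) (CF (snd e)) (res (Ef E (snd e)) x) e}"

definition legal_f_pair :: "('w \<times> 'f) set \<Rightarrow> ('w,'f) vec \<Rightarrow> ('f \<Rightarrow> ('w,'f) vec \<Rightarrow> ('w,'f) vec) \<Rightarrow>
    ('w,'f) vec \<Rightarrow> ('w \<times> 'f) \<Rightarrow> ('w \<times> 'f) \<Rightarrow> bool" where
  "legal_f_pair E b CF x a c \<longleftrightarrow> a \<in> Uplus E b CF x \<and> c \<in> Ef E (snd a) - {a} \<and>
     CF (snd a) (\<lambda>e. res (Ef E (snd a)) x e + unitv a e) =
       (\<lambda>e. res (Ef E (snd a)) x e + unitv a e - unitv c e)"

definition legal_w_pair :: "('w \<times> 'f) set \<Rightarrow> ('w,'f) vec \<Rightarrow> ('w \<Rightarrow> ('w,'f) vec \<Rightarrow> ('w,'f) vec) \<Rightarrow>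
    ('f \<Rightarrow> ('w,'f) vec \<Rightarrow> ('w,'f) vec) \<Rightarrow> ('w,'f) vec \<Rightarrow> ('w \<times> 'f) \<Rightarrow> ('w \<times> 'f) \<Rightarrow> bool" where
  "legal_w_pair E b CW CF x c a \<longleftrightarrow> c \<in> Uminus E b CF x \<and> a \<in> Uplus E b CF x \<and> fst c = fst a \<and>
     acceptable b (Ew E (fst c)) (CW (fst c)) (\<lambda>e. res (Ew E (fst c)) x e + unitv a e - unitv c e)"

definition essential_w_pair :: "('w \<times> 'f) set \<Rightarrow> ('w,'f) vec \<Rightarrow> ('w \<Rightarrow> ('w,'f) vec \<Rightarrow> ('w,'f) vec) \<Rightarrow>
    ('f \<Rightarrow> ('w,'f) vec \<Rightarrow> ('w,'f) vec) \<Rightarrow> ('w,'f) vec \<Rightarrow> ('w \<times> 'f) \<Rightarrow> ('w \<times> 'f) \<Rightarrow> bool" where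
  "essential_w_pair E b CW CF x c a \<longleftrightarrow> legal_w_pair E b CW CF x c a \<and>
     \<not> (\<exists>d \<in> (Uplus E b CF x \<inter> Ew E (fst c)) - {a}.
          interesting b (Ew E (fst c)) (CW (fst c)) (\<lambda>e. res (Ew E (fst c)) x e + unitv a e - unitv c e) d)"

datatype ('w,'f) node = WN "'w \<times> 'f" | FN "'w \<times> 'f"

definition Dnodes :: "('w \<times> 'f) set \<Rightarrow> ('w,'f) vec \<Rightarrow> ('f \<Rightarrow> ('w,'f) vec \<Rightarrow> ('w,'f) vec) \<Rightarrow> ('w,'f) vec \<Rightarrow> ('w,'f) node set" where
  "Dnodes E b CF x = WN ` (Uplus E b CF x \<union> Uminus E b CF x) \<union> FN ` (Uplus E b CF x \<union> Uminus E b CF x)"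

definition Darcs :: "('w \<times> 'f) set \<Rightarrow> ('w,'f) vec \<Rightarrow> ('w \<Rightarrow> ('w,'f) vec \<Rightarrow> ('w,'f) vec) \<Rightarrow>
    ('f \<Rightarrow> ('w,'f) vec \<Rightarrow> ('w,'f) vec) \<Rightarrow> ('w,'f) vec \<Rightarrow> (('w,'f) node \<times> ('w,'f) node) set" where
  "Darcs E b CW CF x =
     {(WN a, FN a) | a. a \<in> Uplus E b CF x} \<union>
     {(FN c, WN c) | c. c \<in> Uminus E b CF x} \<union>
     {(FN a, FN c) | a c. legal_f_pair E b CF x a c} \<union>
     {(WN c, WN a) | c a. essential_w_pair E b CW CF x c a}"

definition del_step :: "('n \<times> 'n) set \<Rightarrow> 'n set \<Rightarrow> 'n set" where
  "del_step A S = {v \<in> S. \<exists>u \<in> S. (u, v) \<in> A}"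

definition remainder :: "('n \<times> 'n) set \<Rightarrow> 'n set \<Rightarrow> 'n set" where
  "remainder A V = (\<Inter>n. (del_step A ^^ n) V)"

definition dcycle :: "('n \<times> 'n) set \<Rightarrow> 'n set \<Rightarrow> 'n list \<Rightarrow> bool" where
  "dcycle A S vs \<longleftrightarrow> vs \<noteq> [] \<and> distinct vs \<and> set vs \<subseteq> S \<and>
     (\<forall>i < length vs. (vs ! i, vs ! ((i + 1) mod length vs)) \<in> A)"

definition chiR :: "('w \<times> 'f) set \<Rightarrow> ('w,'f) vec \<Rightarrow> ('f \<Rightarrow> ('w,'f) vec \<Rightarrow> ('w,'f) vec) \<Rightarrow> ('w,'f) vec \<Rightarrow>
    ('w,'f) node set \<Rightarrow> ('w,'f) vec" where
  "chiR E b CF x S = (\<lambda>e. if WN e \<in> S \<or> FN e \<in> S then (if e \<in> Uplus E b CF x then 1 else -1) else 0)"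

text \<open>\<R>(x), each rotation represented by its vector \<chi>^R\<close>
definition rotations :: "('w \<times> 'f) set \<Rightarrow> ('w,'f) vec \<Rightarrow> ('w \<Rightarrow> ('w,'f) vec \<Rightarrow> ('w,'f) vec) \<Rightarrow>
    ('f \<Rightarrow> ('w,'f) vec \<Rightarrow> ('w,'f) vec) \<Rightarrow> ('w,'f) vec \<Rightarrow> ('w,'f) vec set" where
  "rotations E b CW CF x =
     {chiR E b CF x (set vs) | vs.
        dcycle (Darcs E b CW CF x) (remainder (Darcs E b CW CF x) (Dnodes E b CF x)) vs}"

end

theory Submission
  imports Defs
begin

text \<open>Write the rotated vector as \<open>x' = x + 1\<^sub>A - 1\<^sub>C\<close>, where \<open>A\<close> and \<open>C\<close> are the
  edges \<open>a\<^sub>i\<close> and \<open>c\<^sub>i\<close> of the cycle. Along the cycle every \<open>a \<in> A\<close> at a firm \<open>f\<close> is left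
  by an \<open>f\<close>-arc to some \<open>c \<in> C\<close> at \<open>f\<close>, and every \<open>c \<in> C\<close> at a worker \<open>w\<close> by an
  essential \<open>w\<close>-arc to some \<open>a \<in> A\<close> at \<open>w\<close>; since the cycle permutes its vertices, this
  gives \<open>|A\<^sub>f| \<le> |C\<^sub>f|\<close> and \<open>|C\<^sub>w| \<le> |A\<^sub>w|\<close>.
  At a firm, (A2) bounds the choice from \<open>x\<^sub>f + 1\<^bsub>A\<^sub>f\<^esub>\<close> by \<open>x'\<^sub>f\<close>, and (A3) together
  with the count forces equality, so \<open>x'\<^sub>f\<close> is acceptable and preferred to \<open>x\<^sub>f\<close>.
  At a worker, (A2) applied to the essential single swaps shows that \<open>x'\<^sub>w\<close> is acceptable,
  and an edge of \<open>U\<^sub>F\<^sup>+(x)\<close> interesting for the worker under \<open>x'\<^sub>w\<close> would violate (A3).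
  Since an edge blocking \<open>x'\<close> has to lie in \<open>U\<^sub>F\<^sup>+(x)\<close>, \<open>x'\<close> is stable.\<close>

definition exchange :: "('w,'f) vec \<Rightarrow> ('w \<times> 'f) set \<Rightarrow> ('w \<times> 'f) set \<Rightarrow> ('w,'f) vec" where
  "exchange z A D = (\<lambda>e. z e + of_bool (e \<in> A) - of_bool (e \<in> D))"

lemma exchange_apply: "exchange z A D e = z e + of_bool (e \<in> A) - of_bool (e \<in> D)"
  by (simp add: exchange_def)

lemma unitv_add_eq_exchange: "(\<lambda>e. z e + unitv a e) = exchange z {a} {}"
  by (auto simp: exchange_def unitv_def)

lemma unitv_swap_eq_exchange: "(\<lambda>e. z e + unitv a e - unitv c e) = exchange z {a} {c}"
  by (auto simp: exchange_def unitv_def)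

lemma res_exchange: "res Ev (exchange z A D) = exchange (res Ev z) (A \<inter> Ev) (D \<inter> Ev)"
  by (auto simp: res_def exchange_def)

lemma sum_exchange:
  assumes "finite Ev" "A \<subseteq> Ev" "D \<subseteq> Ev"
  shows "sum (exchange z A D) Ev = sum z Ev + int (card A) - int (card D)"
proof -
  have "sum (\<lambda>e. of_bool (e \<in> X)) Ev = int (card X)" if "X \<subseteq> Ev" for X
    using assms(1) that by (simp add: sum.If_cases Int_absorb1)
  then show ?thesis
    using assms by (simp add: exchange_def sum.distrib sum_subtractf)
qed

lemma BsetD: "z \<in> Bset b Ev \<Longrightarrow> e \<in> Ev \<Longrightarrow> 0 \<le> z e \<and> z e \<le> b e"
  and Bset_outside: "z \<in> Bset b Ev \<Longrightarrow> e \<notin> Ev \<Longrightarrow> z e = 0"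
  unfolding Bset_def by blast+

lemma exchange_in_Bset:
  assumes "z \<in> Bset b Ev" "A \<subseteq> Ev" "D \<subseteq> Ev"
    and "\<And>a. a \<in> A \<Longrightarrow> z a + 1 \<le> b a" and "\<And>c. c \<in> D \<Longrightarrow> 1 \<le> z c"
  shows "exchange z A D \<in> Bset b Ev"
  unfolding Bset_def exchange_def
proof (intro CollectI allI conjI impI)
  fix e
  assume "e \<in> Ev"
  then have "0 \<le> z e" "z e \<le> b e"
    using BsetD[OF assms(1)] by auto
  moreover have "e \<in> A \<Longrightarrow> z e + 1 \<le> b e" "e \<in> D \<Longrightarrow> 1 \<le> z e"
    using assms(4,5) by auto
  ultimately show "0 \<le> z e + of_bool (e \<in> A) - of_bool (e \<in> D)"
    and "z e + of_bool (e \<in> A) - of_bool (e \<in> D) \<le> b e"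
    by (cases "e \<in> A"; cases "e \<in> D"; simp)+
next
  fix e
  assume "e \<notin> Ev"
  then show "z e + of_bool (e \<in> A) - of_bool (e \<in> D) = 0"
    using assms(2,3) Bset_outside[OF assms(1)] by auto
qed

lemma sum_eq_if_le:
  fixes f g :: "'a \<Rightarrow> int"
  assumes "finite A" "\<And>e. e \<in> A \<Longrightarrow> f e \<le> g e" "sum g A \<le> sum f A" "e \<in> A"
  shows "f e = g e"
  using sum_strict_mono_ex1[of A f g] assms by force

locale choice_function =
  fixes b :: "('w,'f) vec" and Ev :: "('w \<times> 'f) set" and C :: "('w,'f) vec \<Rightarrow> ('w,'f) vec"
  assumes choice_fun: "choice_fun b Ev C"
begin

text \<open>The axioms (A1), (A2), (A3) are \<open>choice_eq_if_between\<close>, \<open>choice_min_le\<close> and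
  \<open>choice_size_mono\<close>.\<close>

lemma choice_in_Bset: "z \<in> Bset b Ev \<Longrightarrow> C z \<in> Bset b Ev"
  using choice_fun unfolding choice_fun_def by blast

lemma choice_le: "z \<in> Bset b Ev \<Longrightarrow> C z e \<le> z e"
  using choice_fun unfolding choice_fun_def le_fun_def by blast

lemma choice_eq_if_between:
  "z \<in> Bset b Ev \<Longrightarrow> z' \<in> Bset b Ev \<Longrightarrow> z' \<le> z \<Longrightarrow> C z \<le> z' \<Longrightarrow> C z' = C z"
  using choice_fun unfolding choice_fun_def by blast

lemma choice_min_le:
  assumes "z \<in> Bset b Ev" "z' \<in> Bset b Ev" "z' \<le> z"
  shows "min (C z e) (z' e) \<le> C z' e"
  using choice_fun assms unfolding choice_fun_def le_fun_def by blast

lemma choice_size_mono: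
  "z \<in> Bset b Ev \<Longrightarrow> z' \<in> Bset b Ev \<Longrightarrow> z' \<le> z \<Longrightarrow> vsize Ev (C z') \<le> vsize Ev (C z)"
  using choice_fun unfolding choice_fun_def by blast

lemma interesting_iff:
  assumes z: "z \<in> Bset b Ev"
  shows "interesting b Ev C z e \<longleftrightarrow> e \<in> Ev \<and> z e + 1 \<le> b e \<and> z e < C (exchange z {e} {}) e"
proof
  assume "interesting b Ev C z e"
  then obtain z' where e: "e \<in> Ev" and z': "z' \<in> Bset b Ev" "z e < z' e"
    "\<forall>d. d \<noteq> e \<longrightarrow> z' d = z d" "z e < C z' e"
    unfolding interesting_def by blast
  have "z' e \<le> b e"
    using z' e unfolding Bset_def by blast
  with z' have room: "z e + 1 \<le> b e"
    by linarith
  have "exchange z {e} {} \<in> Bset b Ev"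
    by (rule exchange_in_Bset[OF z]) (use e room in auto)
  moreover have "exchange z {e} {} \<le> z'"
    using z' by (auto simp: exchange_apply le_fun_def)
  ultimately have "min (C z' e) (exchange z {e} {} e) \<le> C (exchange z {e} {}) e"
    by (rule choice_min_le[OF z'(1)])
  with z' e room show "e \<in> Ev \<and> z e + 1 \<le> b e \<and> z e < C (exchange z {e} {}) e"
    by (simp add: exchange_apply)
next
  assume "e \<in> Ev \<and> z e + 1 \<le> b e \<and> z e < C (exchange z {e} {}) e"
  moreover from this have "exchange z {e} {} \<in> Bset b Ev"
    by (intro exchange_in_Bset[OF z]) auto
  ultimately show "interesting b Ev C z e"
    unfolding interesting_def by (auto simp: exchange_apply intro!: bexI[of _ "exchange z {e} {}"])
qed

lemma choice_eq_if_uninteresting_increase: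
  assumes u: "acceptable b Ev C u" and v: "v \<in> Bset b Ev" and "u \<le> v"
    and uninteresting: "\<And>e. u e < v e \<Longrightarrow> \<not> interesting b Ev C u e"
  shows "C v = u"
proof -
  have uB: "u \<in> Bset b Ev" and Cu: "C u = u"
    using u unfolding acceptable_def by auto
  have "C v e \<le> u e" for e
  proof (cases "u e < v e")
    case False
    then show ?thesis
      using choice_le[OF v, of e] by simp
  next
    case True
    then have e: "e \<in> Ev"
      using Bset_outside[OF uB] Bset_outside[OF v] by fastforce
    define z where "z = (\<lambda>d. if d = e then v e else u d)"
    have zB: "z \<in> Bset b Ev"
      using uB v e unfolding Bset_def z_def by auto
    have "min (C v e) (z e) \<le> C z e"
      by (rule choice_min_le[OF v zB]) (use \<open>u \<le> v\<close> in \<open>auto simp: z_def le_fun_def\<close>)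
    moreover have "\<not> u e < C z e"
      using uninteresting[OF True] e zB True unfolding interesting_def z_def by auto
    ultimately show ?thesis
      using choice_le[OF v, of e] by (simp add: z_def)
  qed
  then have "C u = C v"
    using choice_eq_if_between[OF v uB \<open>u \<le> v\<close>] by (simp add: le_fun_def)
  with Cu show ?thesis
    by simp
qed

lemma choice_eq_if_le_choice:
  assumes "z \<in> Bset b Ev" "\<And>e. z e \<le> C z e"
  shows "C z = z"
  using assms choice_le[OF assms(1)] by (simp add: antisym fun_eq_iff)

end

lemma vsize_eq_sum: "z \<in> Bset b Ev \<Longrightarrow> vsize Ev z = sum z Ev"
  unfolding vsize_def by (rule sum.cong) (auto dest: BsetD)

locale finite_choice_function = choice_function +
  assumes finite_Ev: "finite Ev"
begin

lemma choice_sum_mono: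
  "z \<in> Bset b Ev \<Longrightarrow> z' \<in> Bset b Ev \<Longrightarrow> z' \<le> z \<Longrightarrow> sum (C z') Ev \<le> sum (C z) Ev"
  using choice_size_mono vsize_eq_sum choice_in_Bset by metis

lemma replaced_edge_not_interesting:
  assumes x: "acceptable b Ev C x" and "a \<in> Ev" "c \<in> Ev" "a \<noteq> c"
    and a: "interesting b Ev C x a"
    and replace: "C (exchange x {a} {}) = exchange x {a} {c}"
  shows "1 \<le> x c \<and> \<not> interesting b Ev C x c"
proof -
  have xB: "x \<in> Bset b Ev"
    using x unfolding acceptable_def by blast
  let ?xa = "exchange x {a} {}"
  have xaB: "?xa \<in> Bset b Ev"
    using a \<open>a \<in> Ev\<close> interesting_iff[OF xB] by (intro exchange_in_Bset[OF xB]) auto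
  have "0 \<le> C ?xa c"
    using BsetD[OF choice_in_Bset[OF xaB] \<open>c \<in> Ev\<close>] by blast
  then have "1 \<le> x c"
    using replace \<open>a \<noteq> c\<close> by (simp add: exchange_apply)
  moreover have "\<not> interesting b Ev C x c"
  proof
    assume c: "interesting b Ev C x c"
    let ?xc = "exchange x {c} {}" and ?z = "exchange x {a, c} {}"
    have xcB: "?xc \<in> Bset b Ev" and zB: "?z \<in> Bset b Ev"
      using a c \<open>a \<in> Ev\<close> \<open>c \<in> Ev\<close> interesting_iff[OF xB]
      by (auto intro!: exchange_in_Bset[OF xB])
    have "min (C ?z c) (?xa c) \<le> C ?xa c"
      by (rule choice_min_le[OF zB xaB]) (auto simp: exchange_apply le_fun_def)
    then have "C ?z c < ?xa c"
      using replace \<open>a \<noteq> c\<close> by (simp add: exchange_apply)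
    moreover have "C ?z e \<le> ?xa e" if "e \<noteq> c" for e
      using choice_le[OF zB, of e] that by (simp add: exchange_apply)
    ultimately have "C ?z \<le> ?xa"
      by (metis le_funI less_imp_le)
    then have Cz: "C ?z = exchange x {a} {c}"
      using choice_eq_if_between[OF zB xaB] replace by (auto simp: exchange_apply le_fun_def)
    \<comment> \<open>Then \<open>x + 1\<^sup>c\<close> is chosen entirely, although its size exceeds that of the choice
      \<open>x + 1\<^sup>a - 1\<^sup>c\<close> from the larger \<open>x + 1\<^sup>a + 1\<^sup>c\<close>, contradicting (A3).\<close>
    have "?xc e \<le> C ?xc e" for e
    proof (cases "e = c")
      case True
      then show ?thesis
        using c interesting_iff[OF xB] by (simp add: exchange_apply)
    next
      case False
      have "min (C ?z e) (?xc e) \<le> C ?xc e"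
        by (rule choice_min_le[OF zB xcB]) (auto simp: exchange_apply le_fun_def)
      with False show ?thesis
        unfolding Cz by (simp add: exchange_apply)
    qed
    then have "C ?xc = ?xc"
      by (rule choice_eq_if_le_choice[OF xcB])
    then have "sum ?xc Ev \<le> sum (exchange x {a} {c}) Ev"
      using choice_sum_mono[OF zB xcB] Cz by (auto simp: exchange_apply le_fun_def)
    then show False
      using sum_exchange[OF finite_Ev] \<open>a \<in> Ev\<close> \<open>c \<in> Ev\<close> by simp
  qed
  ultimately show ?thesis
    by blast
qed

end

locale F_exchange = finite_choice_function +
  fixes x :: "('w,'f) vec" and A D :: "('w \<times> 'f) set"
  assumes acceptable: "acceptable b Ev C x"
    and A_subset: "A \<subseteq> Ev" and D_subset: "D \<subseteq> Ev" and disjoint: "A \<inter> D = {}"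
    and room: "\<And>a. a \<in> A \<Longrightarrow> x a + 1 \<le> b a"
    and replaced: "\<And>c. c \<in> D \<Longrightarrow> \<exists>a\<in>A. C (exchange x {a} {}) = exchange x {a} {c}"
    and card_le: "card A \<le> card D"
begin

lemma x_Bset: "x \<in> Bset b Ev" and choice_x: "C x = x"
  using acceptable unfolding acceptable_def by auto

lemma raised_Bset: "exchange x A {} \<in> Bset b Ev"
  using A_subset room by (intro exchange_in_Bset[OF x_Bset]) auto

lemma choice_raised: "C (exchange x A {}) = exchange x A D"
proof -
  let ?y = "exchange x A {}" and ?x' = "exchange x A D"
  have le: "C ?y e \<le> ?x' e" for e
  proof (cases "e \<in> D")
    case True
    then obtain a where a: "a \<in> A" and replace: "C (exchange x {a} {}) = exchange x {a} {e}"
      using replaced by blast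
    have xaB: "exchange x {a} {} \<in> Bset b Ev"
      using a A_subset room by (intro exchange_in_Bset[OF x_Bset]) auto
    have "min (C ?y e) (exchange x {a} {} e) \<le> C (exchange x {a} {}) e"
      by (rule choice_min_le[OF raised_Bset xaB]) (use a in \<open>auto simp: exchange_apply le_fun_def\<close>)
    moreover have "e \<notin> A" "a \<noteq> e"
      using True a disjoint by blast+
    ultimately show ?thesis
      using True unfolding replace by (simp add: exchange_apply)
  next
    case False
    then show ?thesis
      using choice_le[OF raised_Bset, of e] by (simp add: exchange_apply)
  qed
  have "sum ?x' Ev \<le> sum x Ev"
    using sum_exchange[OF finite_Ev A_subset D_subset] card_le by simp
  also have "\<dots> \<le> sum (C ?y) Ev"
    using choice_sum_mono[OF raised_Bset x_Bset] choice_x by (simp add: exchange_apply le_fun_def)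
  finally have "C ?y e = ?x' e" if "e \<in> Ev" for e
    using sum_eq_if_le[OF finite_Ev, of "C ?y" ?x'] le that by blast
  moreover have "C ?y e = ?x' e" if "e \<notin> Ev" for e
    using that A_subset D_subset Bset_outside[OF choice_in_Bset[OF raised_Bset]] Bset_outside[OF x_Bset]
    by (auto simp: exchange_apply)
  ultimately show ?thesis
    by blast
qed

lemma acceptable_exchange: "acceptable b Ev C (exchange x A D)"
proof -
  have x'B: "exchange x A D \<in> Bset b Ev"
    using choice_in_Bset[OF raised_Bset] by (simp add: choice_raised)
  have "C (exchange x A D) = C (exchange x A {})"
    by (rule choice_eq_if_between[OF raised_Bset x'B]) (auto simp: choice_raised exchange_apply le_fun_def)
  with x'B show ?thesis
    unfolding acceptable_def choice_raised by simp
qed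

lemma pref_le_exchange: "pref_le b Ev C x (exchange x A D)"
proof -
  have "(\<lambda>e. max (exchange x A D e) (x e)) = exchange x A {}"
    using disjoint by (auto simp: exchange_apply fun_eq_iff)
  then have "C (\<lambda>e. max (exchange x A D e) (x e)) = exchange x A D"
    by (simp add: choice_raised)
  then show ?thesis
    unfolding pref_le_def pref_strict_def using acceptable acceptable_exchange
    by (cases "x = exchange x A D") simp_all
qed

lemma x'_Bset: "exchange x A D \<in> Bset b Ev"
  using acceptable_exchange unfolding acceptable_def by blast

lemma uninteresting_exchange_on_D:
  assumes "c \<in> D"
  shows "\<not> interesting b Ev C (exchange x A D) c"
proof
  let ?x1 = "exchange (exchange x A D) {c} {}"
  assume "interesting b Ev C (exchange x A D) c"
  then have c: "c \<in> Ev" "exchange x A D c + 1 \<le> b c" "exchange x A D c < C ?x1 c"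
    using interesting_iff[OF x'_Bset] by blast+
  have "?x1 \<in> Bset b Ev"
    using c by (intro exchange_in_Bset[OF x'_Bset]) auto
  then have "C ?x1 = C (exchange x A {})"
    by (rule choice_eq_if_between[OF raised_Bset])
      (use assms disjoint in \<open>auto simp: choice_raised exchange_apply le_fun_def\<close>)
  with c(3) show False
    by (simp add: choice_raised)
qed

lemma interesting_exchange_outside:
  assumes e: "e \<notin> A" "e \<notin> D" and "interesting b Ev C (exchange x A D) e"
  shows "interesting b Ev C x e"
proof -
  let ?y = "exchange x A {}" and ?x' = "exchange x A D"
  let ?x1 = "exchange ?x' {e} {}" and ?y1 = "exchange ?y {e} {}" and ?xe = "exchange x {e} {}"
  have int: "e \<in> Ev" "?x' e + 1 \<le> b e" "?x' e < C ?x1 e"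
    using assms(3) interesting_iff[OF x'_Bset] by blast+
  have x1B: "?x1 \<in> Bset b Ev"
    using int by (intro exchange_in_Bset[OF x'_Bset]) auto
  have y1B: "?y1 \<in> Bset b Ev"
    using e int by (intro exchange_in_Bset[OF raised_Bset]) (auto simp: exchange_apply)
  have "C ?y1 d \<le> ?x1 d" for d
  proof (cases "d = e")
    case True
    then show ?thesis
      using choice_le[OF y1B, of d] e by (simp add: exchange_apply)
  next
    case False
    have "min (C ?y1 d) (?y d) \<le> C ?y d"
      by (rule choice_min_le[OF y1B raised_Bset]) (auto simp: exchange_apply le_fun_def)
    moreover have "C ?y1 d \<le> ?y d"
      using choice_le[OF y1B, of d] False by (simp add: exchange_apply)
    ultimately show ?thesis
      using False unfolding choice_raised by (simp add: exchange_apply)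
  qed
  then have "C ?x1 = C ?y1"
    by (intro choice_eq_if_between[OF y1B x1B]) (auto simp: exchange_apply le_fun_def)
  with int(3) e have "x e < C ?y1 e"
    by (simp add: exchange_apply)
  moreover have "min (C ?y1 e) (?xe e) \<le> C ?xe e"
    using e int by (intro choice_min_le[OF y1B] exchange_in_Bset[OF x_Bset])
      (auto simp: exchange_apply le_fun_def)
  ultimately have "x e < C ?xe e"
    by (simp add: exchange_apply)
  then show ?thesis
    using e int interesting_iff[OF x_Bset] by (simp add: exchange_apply)
qed

lemma interesting_exchangeD:
  "interesting b Ev C (exchange x A D) e \<Longrightarrow> e \<in> A \<or> interesting b Ev C x e"
  using uninteresting_exchange_on_D interesting_exchange_outside by blast

end

locale W_exchange = finite_choice_function +
  fixes x :: "('w,'f) vec" and A D U :: "('w \<times> 'f) set"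
  assumes acceptable: "acceptable b Ev C x"
    and U_subset: "U \<subseteq> Ev" and A_subset: "A \<subseteq> U" and D_subset: "D \<subseteq> Ev"
    and disjoint: "U \<inter> D = {}"
    and room: "\<And>a. a \<in> A \<Longrightarrow> x a + 1 \<le> b a"
    and positive: "\<And>c. c \<in> D \<Longrightarrow> 1 \<le> x c"
    and uninteresting: "\<And>d. d \<in> U \<Longrightarrow> \<not> interesting b Ev C x d"
    and swapped: "\<And>a. a \<in> A \<Longrightarrow> \<exists>c\<in>D. acceptable b Ev C (exchange x {a} {c}) \<and>
                    (\<forall>d\<in>U - {a}. \<not> interesting b Ev C (exchange x {a} {c}) d)"
    and card_le: "card D \<le> card A"
begin

lemma x_Bset: "x \<in> Bset b Ev"
  using acceptable unfolding acceptable_def by blast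

lemma exchange_Bset: "exchange x A D \<in> Bset b Ev"
  using A_subset U_subset D_subset room positive by (intro exchange_in_Bset[OF x_Bset]) auto

lemma above_exchange_on_D:
  assumes "exchange x A D \<le> v" and above: "{e. exchange x A D e < v e} \<subseteq> U"
    and "c \<in> D"
  shows "v c = x c - 1"
proof -
  have "c \<notin> U" "c \<notin> A"
    using \<open>c \<in> D\<close> disjoint A_subset by blast+
  moreover have "exchange x A D c \<le> v c"
    using assms(1) by (rule le_funD)
  ultimately show ?thesis
    using above \<open>c \<in> D\<close> by (fastforce simp: exchange_apply)
qed

text \<open>Vectors \<open>v \<ge> exchange x A D\<close> exceeding it only on \<open>U\<close> are compared with two
  vectors whose choice is known: \<open>v + 1\<^sub>D\<close>, from which \<open>x\<close> is chosen, and
  \<open>v + 1\<^bsub>D - {c}\<^esub>\<close>, from which the single swap \<open>x + 1\<^sup>a - 1\<^sup>c\<close> is chosen.\<close>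

lemma choice_restored:
  assumes v: "v \<in> Bset b Ev" "exchange x A D \<le> v" and above: "{e. exchange x A D e < v e} \<subseteq> U"
  shows "exchange v D {} \<in> Bset b Ev" and "C (exchange v D {}) = x"
proof -
  note vD = above_exchange_on_D[OF v(2) above]
  show vDB: "exchange v D {} \<in> Bset b Ev"
    using D_subset vD BsetD[OF x_Bset] by (intro exchange_in_Bset[OF v(1)]) auto
  show "C (exchange v D {}) = x"
  proof (rule choice_eq_if_uninteresting_increase[OF acceptable vDB])
    show "x \<le> exchange v D {}"
    proof (rule le_funI)
      fix e
      show "x e \<le> exchange v D {} e"
        using vD[of e] le_funD[OF v(2), of e] by (cases "e \<in> D"; cases "e \<in> A") (auto simp: exchange_apply)
    qed
    show "\<not> interesting b Ev C x e" if "x e < exchange v D {} e" for e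
    proof -
      have "e \<in> A \<or> exchange x A D e < v e"
        using that vD[of e] by (cases "e \<in> D"; cases "e \<in> A") (auto simp: exchange_apply)
      then show ?thesis
        using uninteresting above A_subset by blast
    qed
  qed
qed

lemma le_choice_where_unchanged:
  assumes v: "v \<in> Bset b Ev" "exchange x A D \<le> v" and above: "{e. exchange x A D e < v e} \<subseteq> U"
    and unchanged: "v d = exchange x A D d"
  shows "v d \<le> C v d"
proof (cases "d \<in> A")
  case False
  note Y = choice_restored[OF v above]
  have "min (C (exchange v D {}) d) (v d) \<le> C v d"
    by (rule choice_min_le[OF Y(1) v(1)]) (auto simp: exchange_apply le_fun_def)
  moreover have "v d \<le> x d"
    using unchanged False by (simp add: exchange_apply)
  ultimately show ?thesis
    by (simp add: Y(2) min.absorb2)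
next
  case True
  then obtain c where c: "c \<in> D" and u: "acceptable b Ev C (exchange x {d} {c})"
    and u_uninteresting: "\<forall>e\<in>U - {d}. \<not> interesting b Ev C (exchange x {d} {c}) e"
    using swapped by blast
  note vD = above_exchange_on_D[OF v(2) above]
  have dc: "d \<noteq> c" "d \<notin> D"
    using True c A_subset disjoint by blast+
  let ?Z = "exchange v (D - {c}) {}"
  have ZB: "?Z \<in> Bset b Ev"
    using D_subset vD BsetD[OF x_Bset] by (intro exchange_in_Bset[OF v(1)]) auto
  have "C ?Z = exchange x {d} {c}"
  proof (rule choice_eq_if_uninteresting_increase[OF u ZB])
    have "exchange x {d} {c} e \<le> ?Z e \<and> (exchange x {d} {c} e < ?Z e \<longrightarrow> e \<in> U - {d})" for e
      using vD[of e] le_funD[OF v(2), of e] above unchanged True c dc A_subset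
      by (cases "e \<in> D"; cases "e \<in> A"; cases "e = d"; cases "e = c") (auto simp: exchange_apply)
    then show "exchange x {d} {c} \<le> ?Z" and
      "\<And>e. exchange x {d} {c} e < ?Z e \<Longrightarrow> \<not> interesting b Ev C (exchange x {d} {c}) e"
      using u_uninteresting by (auto intro: le_funI)
  qed
  moreover have "min (C ?Z d) (v d) \<le> C v d"
    by (rule choice_min_le[OF ZB v(1)]) (auto simp: exchange_apply le_fun_def)
  ultimately show ?thesis
    using unchanged True dc by (simp add: exchange_apply)
qed

lemma acceptable_exchange: "acceptable b Ev C (exchange x A D)"
proof -
  have "C (exchange x A D) = exchange x A D"
    by (rule choice_eq_if_le_choice[OF exchange_Bset])
      (rule le_choice_where_unchanged[OF exchange_Bset]; simp)
  then show ?thesis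
    using exchange_Bset unfolding acceptable_def by blast
qed

text \<open>If some \<open>e \<in> U\<close> were interesting, then \<open>x' + 1\<^sup>e\<close> would be acceptable and
  dominated by a vector from which \<open>x\<close> is chosen, although it is larger than \<open>x\<close>.\<close>

lemma uninteresting_exchange:
  assumes "e \<in> U"
  shows "\<not> interesting b Ev C (exchange x A D) e"
proof
  let ?x' = "exchange x A D"
  let ?x1 = "exchange ?x' {e} {}"
  assume "interesting b Ev C ?x' e"
  then have e: "e \<in> Ev" "?x' e + 1 \<le> b e" "?x' e < C ?x1 e"
    using interesting_iff[OF exchange_Bset] by blast+
  have x1B: "?x1 \<in> Bset b Ev"
    using e by (intro exchange_in_Bset[OF exchange_Bset]) auto
  have x1: "?x' \<le> ?x1" "{d. ?x' d < ?x1 d} \<subseteq> U"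
    using \<open>e \<in> U\<close> by (auto simp: exchange_apply le_fun_def split: if_splits)
  have "C ?x1 = ?x1"
  proof (rule choice_eq_if_le_choice[OF x1B])
    show "?x1 d \<le> C ?x1 d" for d
    proof (cases "d = e")
      case True
      with e(3) show ?thesis
        by (simp add: exchange_apply)
    next
      case False
      then have "?x1 d = ?x' d"
        by (simp add: exchange_apply)
      then show ?thesis
        by (rule le_choice_where_unchanged[OF x1B x1])
    qed
  qed
  moreover note Y = choice_restored[OF x1B x1]
  ultimately have "sum ?x1 Ev \<le> sum x Ev"
    using choice_sum_mono[OF Y(1) x1B] by (auto simp: exchange_apply le_fun_def)
  moreover have "sum ?x1 Ev = sum ?x' Ev + 1"
    using sum_exchange[OF finite_Ev, of "{e}" "{}" ?x'] e(1) by simp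
  moreover have "sum ?x' Ev = sum x Ev + int (card A) - int (card D)"
    using A_subset U_subset by (intro sum_exchange[OF finite_Ev _ D_subset]) blast
  ultimately show False
    using card_le by linarith
qed

end

lemma dcycle_successor:
  assumes "dcycle Arcs V vs"
  obtains succ where "bij_betw succ (set vs) (set vs)" "\<And>v. v \<in> set vs \<Longrightarrow> (v, succ v) \<in> Arcs"
proof
  let ?n = "length vs"
  let ?idx = "the_inv_into {..<?n} ((!) vs)"
  have distinct: "distinct vs" and arcs: "\<And>i. i < ?n \<Longrightarrow> (vs ! i, vs ! ((i + 1) mod ?n)) \<in> Arcs"
    using assms unfolding dcycle_def by auto
  have nth: "bij_betw ((!) vs) {..<?n} (set vs)"
    by (rule bij_betw_nth[OF distinct]) simp_all
  have "bij_betw ((!) (rotate1 vs)) {..<?n} (set vs)"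
    by (rule bij_betw_nth) (simp_all add: distinct)
  then show "bij_betw ((!) (rotate1 vs) \<circ> ?idx) (set vs) (set vs)"
    by (rule bij_betw_trans[OF bij_betw_the_inv_into[OF nth]])
  fix v
  assume "v \<in> set vs"
  then have "?idx v < ?n" "vs ! ?idx v = v"
    using bij_betwE[OF bij_betw_the_inv_into[OF nth]] f_the_inv_into_f_bij_betw[OF nth] by auto
  then show "(v, ((!) (rotate1 vs) \<circ> ?idx) v) \<in> Arcs"
    using arcs[of "?idx v"] by (simp add: nth_rotate1)
qed

lemma res_apply: "e \<in> Ev \<Longrightarrow> res Ev z e = z e"
  by (simp add: res_def)

locale stable_instance =
  fixes W :: "'w set" and F :: "'f set" and E :: "('w \<times> 'f) set" and b :: "('w,'f) vec"
    and CW :: "'w \<Rightarrow> ('w,'f) vec \<Rightarrow> ('w,'f) vec" and CF :: "'f \<Rightarrow> ('w,'f) vec \<Rightarrow> ('w,'f) vec"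
    and x :: "('w,'f) vec"
  assumes valid_instance: "instance_ok W F E b CW CF"
    and x_stable: "stable W F E b CW CF x"
begin

abbreviation "Up \<equiv> Uplus E b CF x"
abbreviation "Um \<equiv> Uminus E b CF x"

lemma edge_ends: "e \<in> E \<Longrightarrow> fst e \<in> W \<and> snd e \<in> F"
  using valid_instance mem_Times_iff unfolding instance_ok_def by blast

lemma finite_E: "finite E"
  using valid_instance finite_subset unfolding instance_ok_def by blast

lemma choice_W: "w \<in> W \<Longrightarrow> finite_choice_function b (Ew E w) (CW w)"
  using valid_instance finite_E unfolding instance_ok_def finite_choice_function_def
    finite_choice_function_axioms_def choice_function_def Ew_def by auto

lemma choice_F: "f \<in> F \<Longrightarrow> finite_choice_function b (Ef E f) (CF f)"
  using valid_instance finite_E unfolding instance_ok_def finite_choice_function_def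
    finite_choice_function_axioms_def choice_function_def Ef_def by auto

lemma x_outside: "e \<notin> E \<Longrightarrow> x e = 0"
  and acceptable_W: "w \<in> W \<Longrightarrow> acceptable b (Ew E w) (CW w) (res (Ew E w) x)"
  and acceptable_F: "f \<in> F \<Longrightarrow> acceptable b (Ef E f) (CF f) (res (Ef E f) x)"
  and not_blocking: "\<not> blocking E b CW CF x e"
  using x_stable unfolding stable_def gmatching_def by blast+

lemma Uplus_Uminus_disjoint: "Up \<inter> Um = {}"
  by (auto simp: Uplus_def Uminus_def)

lemma Uminus_positive: "c \<in> Um \<Longrightarrow> 1 \<le> x c"
  by (simp add: Uminus_def)

lemma Uplus_room:
  assumes "a \<in> Up"
  shows "x a + 1 \<le> b a"
proof -
  have a: "a \<in> E" "a \<in> Ef E (snd a)" and f: "snd a \<in> F"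
    using assms edge_ends by (auto simp: Uplus_def Ef_def)
  interpret finite_choice_function b "Ef E (snd a)" "CF (snd a)"
    by (rule choice_F[OF f])
  show ?thesis
    using assms interesting_iff acceptable_F[OF f] res_apply[OF a(2)]
    by (auto simp: Uplus_def acceptable_def)
qed

lemma legal_f_pairD:
  assumes "legal_f_pair E b CF x a c"
  shows "a \<in> Up \<and> c \<in> Um \<and> snd c = snd a"
proof -
  let ?f = "snd a"
  have a: "a \<in> Up" and c: "c \<in> Ef E ?f" "c \<noteq> a"
    and replace: "CF ?f (exchange (res (Ef E ?f) x) {a} {}) = exchange (res (Ef E ?f) x) {a} {c}"
    using assms unfolding legal_f_pair_def unitv_add_eq_exchange unitv_swap_eq_exchange by auto
  have aE: "a \<in> Ef E ?f" and f: "?f \<in> F"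
    using a edge_ends by (auto simp: Uplus_def Ef_def)
  interpret finite_choice_function b "Ef E ?f" "CF ?f"
    by (rule choice_F[OF f])
  have "1 \<le> res (Ef E ?f) x c \<and> \<not> interesting b (Ef E ?f) (CF ?f) (res (Ef E ?f) x) c"
    using a c replace aE
    by (intro replaced_edge_not_interesting[OF acceptable_F[OF f]]) (auto simp: Uplus_def)
  with c a show ?thesis
    by (auto simp: Uminus_def Ef_def res_apply)
qed

lemma essential_w_pairD:
  "essential_w_pair E b CW CF x c a \<Longrightarrow> c \<in> Um \<and> a \<in> Up \<and> fst c = fst a"
  by (simp add: essential_w_pair_def legal_w_pair_def)

lemma arc_from_WN:
  "(WN e, v) \<in> Darcs E b CW CF x \<Longrightarrow>
    e \<in> Up \<and> v = FN e \<or> e \<in> Um \<and> (\<exists>a. v = WN a \<and> essential_w_pair E b CW CF x e a)"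
  unfolding Darcs_def using essential_w_pairD by auto

lemma arc_from_FN:
  "(FN e, v) \<in> Darcs E b CW CF x \<Longrightarrow>
    e \<in> Um \<and> v = WN e \<or> e \<in> Up \<and> (\<exists>c. v = FN c \<and> legal_f_pair E b CF x e c)"
  unfolding Darcs_def using legal_f_pairD by auto

lemma arc_to_WN:
  "(u, WN e) \<in> Darcs E b CW CF x \<Longrightarrow>
    e \<in> Um \<and> u = FN e \<or> e \<in> Up \<and> (\<exists>c. u = WN c \<and> essential_w_pair E b CW CF x c e)"
  unfolding Darcs_def using essential_w_pairD by auto

lemma arc_to_FN:
  "(u, FN e) \<in> Darcs E b CW CF x \<Longrightarrow>
    e \<in> Up \<and> u = WN e \<or> e \<in> Um \<and> (\<exists>a. u = FN a \<and> legal_f_pair E b CF x a e)"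
  unfolding Darcs_def using legal_f_pairD by auto

end

locale rotation = stable_instance W F E b CW CF x
  for W :: "'w set" and F :: "'f set" and E b CW CF x +
  fixes S :: "('w,'f) node set" and succ :: "('w,'f) node \<Rightarrow> ('w,'f) node"
  assumes succ_bij: "bij_betw succ S S"
    and succ_arc: "v \<in> S \<Longrightarrow> (v, succ v) \<in> Darcs E b CW CF x"
begin

definition raised :: "('w \<times> 'f) set" where
  "raised = {e \<in> Up. FN e \<in> S}"

definition lowered :: "('w \<times> 'f) set" where
  "lowered = {e \<in> Um. FN e \<in> S}"

lemma pred_arc:
  assumes "v \<in> S"
  obtains u where "u \<in> S" "(u, v) \<in> Darcs E b CW CF x"
proof -
  have "v \<in> succ ` S"
    using bij_betw_imp_surj_on[OF succ_bij] assms by simp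
  then show thesis
    using that succ_arc by blast
qed

lemma succ_in: "v \<in> S \<Longrightarrow> succ v \<in> S"
  using bij_betwE[OF succ_bij] by blast

lemma WN_in_iff_FN_in: "WN e \<in> S \<longleftrightarrow> FN e \<in> S"
proof
  assume WN: "WN e \<in> S"
  obtain u where u: "u \<in> S" "(u, WN e) \<in> Darcs E b CW CF x"
    using pred_arc[OF WN] .
  have "e \<in> Up \<and> succ (WN e) = FN e \<or> e \<in> Um \<and> u = FN e"
    using arc_from_WN[OF succ_arc[OF WN]] arc_to_WN[OF u(2)] Uplus_Uminus_disjoint by blast
  then show "FN e \<in> S"
    using succ_in[OF WN] u(1) by auto
next
  assume FN: "FN e \<in> S"
  obtain u where u: "u \<in> S" "(u, FN e) \<in> Darcs E b CW CF x"
    using pred_arc[OF FN] .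
  have "e \<in> Um \<and> succ (FN e) = WN e \<or> e \<in> Up \<and> u = WN e"
    using arc_from_FN[OF succ_arc[OF FN]] arc_to_FN[OF u(2)] Uplus_Uminus_disjoint by blast
  then show "WN e \<in> S"
    using succ_in[OF FN] u(1) by auto
qed

lemma rotation_edge: "FN e \<in> S \<Longrightarrow> e \<in> raised \<or> e \<in> lowered"
  using arc_from_FN[OF succ_arc] unfolding raised_def lowered_def by blast

lemma raised_lowered_disjoint: "raised \<inter> lowered = {}"
  using Uplus_Uminus_disjoint unfolding raised_def lowered_def by blast

lemma raised_subset: "raised \<subseteq> E" and lowered_subset: "lowered \<subseteq> E"
  unfolding raised_def lowered_def Uplus_def Uminus_def by auto

lemma rotate_eq_exchange: "(\<lambda>e. x e + chiR E b CF x S e) = exchange x raised lowered"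
  using rotation_edge raised_lowered_disjoint
  by (auto simp: fun_eq_iff chiR_def exchange_apply WN_in_iff_FN_in raised_def lowered_def)

lemma succ_raised:
  assumes "a \<in> raised"
  obtains c where "c \<in> lowered" "succ (FN a) = FN c" "legal_f_pair E b CF x a c"
proof -
  have a: "FN a \<in> S" "a \<in> Up"
    using assms unfolding raised_def by auto
  then obtain c where "succ (FN a) = FN c" "legal_f_pair E b CF x a c"
    using arc_from_FN[OF succ_arc] Uplus_Uminus_disjoint by blast
  moreover have "FN c \<in> S"
    using succ_in[OF a(1)] \<open>succ (FN a) = FN c\<close> by simp
  ultimately show ?thesis
    using that legal_f_pairD unfolding lowered_def by blast
qed

lemma pred_lowered:
  assumes "c \<in> lowered"
  obtains a where "a \<in> raised" "legal_f_pair E b CF x a c"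
proof -
  have c: "FN c \<in> S" "c \<in> Um"
    using assms unfolding lowered_def by auto
  then obtain u where "u \<in> S" "(u, FN c) \<in> Darcs E b CW CF x"
    using pred_arc by blast
  then show ?thesis
    using that c arc_to_FN legal_f_pairD Uplus_Uminus_disjoint unfolding raised_def by blast
qed

lemma succ_lowered:
  assumes "c \<in> lowered"
  obtains a where "a \<in> raised" "succ (WN c) = WN a" "essential_w_pair E b CW CF x c a"
proof -
  have c: "WN c \<in> S" "c \<in> Um"
    using assms WN_in_iff_FN_in unfolding lowered_def by auto
  then obtain a where "succ (WN c) = WN a" "essential_w_pair E b CW CF x c a"
    using arc_from_WN[OF succ_arc] Uplus_Uminus_disjoint by blast
  moreover have "WN a \<in> S"
    using succ_in[OF c(1)] \<open>succ (WN c) = WN a\<close> by simp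
  ultimately show ?thesis
    using that essential_w_pairD WN_in_iff_FN_in unfolding raised_def by blast
qed

lemma pred_raised:
  assumes "a \<in> raised"
  obtains c where "c \<in> lowered" "essential_w_pair E b CW CF x c a"
proof -
  have a: "WN a \<in> S" "a \<in> Up"
    using assms WN_in_iff_FN_in unfolding raised_def by auto
  then obtain u where "u \<in> S" "(u, WN a) \<in> Darcs E b CW CF x"
    using pred_arc by blast
  then show ?thesis
    using that a arc_to_WN essential_w_pairD Uplus_Uminus_disjoint WN_in_iff_FN_in
    unfolding lowered_def by blast
qed

lemma card_raised_le_lowered: "card (raised \<inter> Ef E f) \<le> card (lowered \<inter> Ef E f)"
proof -
  have "succ (FN a) \<in> FN ` (lowered \<inter> Ef E f)" if a: "a \<in> raised \<inter> Ef E f" for a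
  proof -
    obtain c where "c \<in> lowered" "succ (FN a) = FN c" "legal_f_pair E b CF x a c"
      using succ_raised a by blast
    moreover from this have "c \<in> Ef E f"
      using a lowered_subset legal_f_pairD by (auto simp: Ef_def)
    ultimately show ?thesis
      by simp
  qed
  moreover have "inj_on (succ \<circ> FN) (raised \<inter> Ef E f)"
  proof (rule comp_inj_on)
    show "inj_on FN (raised \<inter> Ef E f)"
      by (simp add: inj_on_def)
    show "inj_on succ (FN ` (raised \<inter> Ef E f))"
      by (rule inj_on_subset[OF bij_betw_imp_inj_on[OF succ_bij]]) (auto simp: raised_def)
  qed
  ultimately have "card (raised \<inter> Ef E f) \<le> card (FN ` (lowered \<inter> Ef E f))"
    by (intro card_inj_on_le) (auto simp: finite_E Ef_def)
  then show ?thesis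
    by (simp add: card_image inj_on_def)
qed

lemma card_lowered_le_raised: "card (lowered \<inter> Ew E w) \<le> card (raised \<inter> Ew E w)"
proof -
  have "succ (WN c) \<in> WN ` (raised \<inter> Ew E w)" if c: "c \<in> lowered \<inter> Ew E w" for c
  proof -
    obtain a where "a \<in> raised" "succ (WN c) = WN a" "essential_w_pair E b CW CF x c a"
      using succ_lowered c by blast
    moreover from this have "a \<in> Ew E w"
      using c raised_subset essential_w_pairD by (auto simp: Ew_def)
    ultimately show ?thesis
      by simp
  qed
  moreover have "inj_on (succ \<circ> WN) (lowered \<inter> Ew E w)"
  proof (rule comp_inj_on)
    show "inj_on WN (lowered \<inter> Ew E w)"
      by (simp add: inj_on_def)
    show "inj_on succ (WN ` (lowered \<inter> Ew E w))"
      by (rule inj_on_subset[OF bij_betw_imp_inj_on[OF succ_bij]])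
        (auto simp: lowered_def WN_in_iff_FN_in)
  qed
  ultimately have "card (lowered \<inter> Ew E w) \<le> card (WN ` (raised \<inter> Ew E w))"
    by (intro card_inj_on_le) (auto simp: finite_E Ew_def)
  then show ?thesis
    by (simp add: card_image inj_on_def)
qed

lemma F_exchange:
  assumes "f \<in> F"
  shows "F_exchange b (Ef E f) (CF f) (res (Ef E f) x) (raised \<inter> Ef E f) (lowered \<inter> Ef E f)"
proof (intro F_exchange.intro F_exchange_axioms.intro)
  show "finite_choice_function b (Ef E f) (CF f)"
    using choice_F[OF assms] .
  show "acceptable b (Ef E f) (CF f) (res (Ef E f) x)"
    using acceptable_F[OF assms] .
  show "(raised \<inter> Ef E f) \<inter> (lowered \<inter> Ef E f) = {}"
    using raised_lowered_disjoint by blast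
  show "res (Ef E f) x a + 1 \<le> b a" if "a \<in> raised \<inter> Ef E f" for a
    using that Uplus_room by (simp add: res_apply raised_def)
  show "\<exists>a\<in>raised \<inter> Ef E f. CF f (exchange (res (Ef E f) x) {a} {}) = exchange (res (Ef E f) x) {a} {c}"
    if c: "c \<in> lowered \<inter> Ef E f" for c
  proof -
    obtain a where a: "a \<in> raised" "legal_f_pair E b CF x a c"
      using pred_lowered c by blast
    then have "snd a = f"
      using c legal_f_pairD by (auto simp: Ef_def)
    with a raised_subset show ?thesis
      unfolding legal_f_pair_def unitv_add_eq_exchange unitv_swap_eq_exchange by (auto simp: Ef_def)
  qed
  show "card (raised \<inter> Ef E f) \<le> card (lowered \<inter> Ef E f)"
    by (rule card_raised_le_lowered)
qed auto

lemma W_exchange: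
  assumes "w \<in> W"
  shows "W_exchange b (Ew E w) (CW w) (res (Ew E w) x) (raised \<inter> Ew E w) (lowered \<inter> Ew E w)
    (Up \<inter> Ew E w)"
proof (intro W_exchange.intro W_exchange_axioms.intro)
  show "finite_choice_function b (Ew E w) (CW w)"
    using choice_W[OF assms] .
  show "acceptable b (Ew E w) (CW w) (res (Ew E w) x)"
    using acceptable_W[OF assms] .
  show "(Up \<inter> Ew E w) \<inter> (lowered \<inter> Ew E w) = {}"
    using Uplus_Uminus_disjoint by (auto simp: lowered_def)
  show "res (Ew E w) x a + 1 \<le> b a" if "a \<in> raised \<inter> Ew E w" for a
    using that Uplus_room by (simp add: res_apply raised_def)
  show "1 \<le> res (Ew E w) x c" if "c \<in> lowered \<inter> Ew E w" for c
    using that Uminus_positive by (simp add: res_apply lowered_def)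
  show "\<not> interesting b (Ew E w) (CW w) (res (Ew E w) x) d" if "d \<in> Up \<inter> Ew E w" for d
    using that not_blocking[of d] by (auto simp: blocking_def Uplus_def Ew_def)
  show "\<exists>c\<in>lowered \<inter> Ew E w. acceptable b (Ew E w) (CW w) (exchange (res (Ew E w) x) {a} {c}) \<and>
      (\<forall>d\<in>Up \<inter> Ew E w - {a}. \<not> interesting b (Ew E w) (CW w) (exchange (res (Ew E w) x) {a} {c}) d)"
    if a: "a \<in> raised \<inter> Ew E w" for a
  proof -
    obtain c where c: "c \<in> lowered" "essential_w_pair E b CW CF x c a"
      using pred_raised a by blast
    then have "fst c = w"
      using a essential_w_pairD by (auto simp: Ew_def)
    with c lowered_subset show ?thesis
      unfolding essential_w_pair_def legal_w_pair_def unitv_swap_eq_exchange by (auto simp: Ew_def)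
  qed
  show "raised \<inter> Ew E w \<subseteq> Up \<inter> Ew E w"
    by (auto simp: raised_def)
  show "card (lowered \<inter> Ew E w) \<le> card (raised \<inter> Ew E w)"
    by (rule card_lowered_le_raised)
qed auto

lemma rotated_at_F:
  assumes "f \<in> F"
  shows "acceptable b (Ef E f) (CF f) (res (Ef E f) (exchange x raised lowered))"
    and "pref_le b (Ef E f) (CF f) (res (Ef E f) x) (res (Ef E f) (exchange x raised lowered))"
    and "interesting b (Ef E f) (CF f) (res (Ef E f) (exchange x raised lowered)) e \<Longrightarrow> e \<in> Up"
proof -
  interpret F_exchange b "Ef E f" "CF f" "res (Ef E f) x" "raised \<inter> Ef E f" "lowered \<inter> Ef E f"
    by (rule F_exchange[OF assms])
  show "acceptable b (Ef E f) (CF f) (res (Ef E f) (exchange x raised lowered))"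
    unfolding res_exchange by (rule acceptable_exchange)
  show "pref_le b (Ef E f) (CF f) (res (Ef E f) x) (res (Ef E f) (exchange x raised lowered))"
    unfolding res_exchange by (rule pref_le_exchange)
  assume "interesting b (Ef E f) (CF f) (res (Ef E f) (exchange x raised lowered)) e"
  then have "e \<in> raised \<or> interesting b (Ef E f) (CF f) (res (Ef E f) x) e"
    unfolding res_exchange using interesting_exchangeD by blast
  then show "e \<in> Up"
    unfolding raised_def by (auto simp: Uplus_def interesting_def Ef_def)
qed

lemma rotated_at_W:
  assumes "w \<in> W"
  shows "acceptable b (Ew E w) (CW w) (res (Ew E w) (exchange x raised lowered))"
    and "e \<in> Up \<Longrightarrow> \<not> interesting b (Ew E w) (CW w) (res (Ew E w) (exchange x raised lowered)) e"
proof -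
  interpret W_exchange b "Ew E w" "CW w" "res (Ew E w) x" "raised \<inter> Ew E w" "lowered \<inter> Ew E w"
    "Up \<inter> Ew E w"
    by (rule W_exchange[OF assms])
  show "acceptable b (Ew E w) (CW w) (res (Ew E w) (exchange x raised lowered))"
    unfolding res_exchange by (rule acceptable_exchange)
  show "\<not> interesting b (Ew E w) (CW w) (res (Ew E w) (exchange x raised lowered)) e" if "e \<in> Up"
    using that uninteresting_exchange unfolding res_exchange interesting_def by blast
qed

lemma stable_rotated: "stable W F E b CW CF (exchange x raised lowered)"
  unfolding stable_def gmatching_def
proof (intro conjI allI impI ballI notI)
  fix e
  assume "e \<notin> E"
  then show "exchange x raised lowered e = 0"
    using x_outside raised_subset lowered_subset by (auto simp: exchange_apply)
next
  fix e
  assume e: "e \<in> E"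
  then have "e \<in> Ew E (fst e)" "fst e \<in> W"
    using edge_ends by (auto simp: Ew_def)
  then show "0 \<le> exchange x raised lowered e" "exchange x raised lowered e \<le> b e"
    using rotated_at_W(1) BsetD res_apply unfolding acceptable_def by metis+
next
  assume "\<exists>e. blocking E b CW CF (exchange x raised lowered) e"
  then obtain e where "blocking E b CW CF (exchange x raised lowered) e"
    by blast
  then show False
    unfolding blocking_def using rotated_at_F(3) rotated_at_W(2) edge_ends by blast
qed (use rotated_at_W(1) rotated_at_F(1) in blast)+

lemma precF_rotated:
  assumes "S \<noteq> {}"
  shows "precF F E b CF x (exchange x raised lowered)"
proof -
  obtain e where "FN e \<in> S"
    using assms WN_in_iff_FN_in by (metis all_not_in_conv node.exhaust)
  then have "exchange x raised lowered e \<noteq> x e"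
    using rotation_edge[OF \<open>FN e \<in> S\<close>] raised_lowered_disjoint by (auto simp: exchange_apply)
  then show ?thesis
    unfolding precF_def using rotated_at_F(2) by metis
qed

end

theorem proposition3p4:
  fixes W :: "'w set" and F :: "'f set" and E :: "('w \<times> 'f) set"
    and b :: "('w,'f) vec"
    and CW :: "'w \<Rightarrow> ('w,'f) vec \<Rightarrow> ('w,'f) vec" and CF :: "'f \<Rightarrow> ('w,'f) vec \<Rightarrow> ('w,'f) vec"
    and x chi :: "('w,'f) vec"
  assumes "instance_ok W F E b CW CF"
    and "stable W F E b CW CF x"
    and "x \<noteq> xmax W F E b CW CF"
    and "chi \<in> rotations E b CW CF x"
  shows "stable W F E b CW CF (\<lambda>e. x e + chi e) \<and> precF F E b CF x (\<lambda>e. x e + chi e)"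
proof -
  \<comment> \<open>The hypothesis \<open>x \<noteq> xmax W F E b CW CF\<close> only guarantees that rotations exist.\<close>
  obtain vs where cycle: "dcycle (Darcs E b CW CF x) (remainder (Darcs E b CW CF x) (Dnodes E b CF x)) vs"
    and chi: "chi = chiR E b CF x (set vs)"
    using assms(4) unfolding rotations_def by blast
  obtain succ where "bij_betw succ (set vs) (set vs)"
    and "\<And>v. v \<in> set vs \<Longrightarrow> (v, succ v) \<in> Darcs E b CW CF x"
    using dcycle_successor[OF cycle] by blast
  with assms(1,2) interpret rotation W F E b CW CF x "set vs" succ
    by unfold_locales
  have "set vs \<noteq> {}"
    using cycle by (simp add: dcycle_def)
  then show ?thesis
    unfolding chi rotate_eq_exchange using stable_rotated precF_rotated by blast
qed

end
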